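(* Let $c_1 = \frac{\sqrt5-1}{2}$. Let $g$ be a fixed real polynomial with $g(c_1)g(-c_1)>0$ and let $h > 0$. Then there exists $n_0$ (depending only on $g$ and $h$) such that for every integer polynomial $f$ all of whose coefficients are at most $h$ in absolute value, and every $n \geq n_0$, the polynomial $P_n(x) = f(x)x^n + g(x)$ satisfies $P_n(c_1)P_n(-c_1) > 0$. *)

theory Defs
  imports "HOL-Computational_Algebra.Polynomial" Complex_Main
begin

definition c1 :: real where "c1 = (sqrt 5 - 1) / 2"

end

theory Submission
  imports Defs
begin

(* At x = \<plusminus>c1, where |x| < 1, the term f(x) x^n is at most h c1^n / (1 - c1) in absolute
   value, uniformly in f.  For large n it is therefore smaller than both |g(c1)| and
   |g(-c1)|, so adding it changes neither the sign of P_n(c1) nor that of P_n(-c1). *)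

lemma c1_pos: "0 < c1"
  unfolding c1_def by (simp add: real_less_rsqrt)

lemma c1_less_1: "c1 < 1"
proof -
  have "sqrt 5 < 3"
    by (rule real_less_lsqrt) simp_all
  then show ?thesis
    unfolding c1_def by simp
qed

lemma norm_poly_le_geometric:
  fixes p :: "'a::real_normed_field poly"
  assumes coeff_bound: "\<And>i. norm (coeff p i) \<le> h"
    and "norm x \<le> r" and "r < 1"
  shows "norm (poly p x) \<le> h / (1 - r)"
proof -
  have "r \<ge> 0"
    using assms(2) norm_ge_zero order_trans by blast
  have "h \<ge> 0"
    using coeff_bound[of 0] norm_ge_zero order_trans by blast
  have "norm (poly p x) \<le> (\<Sum>i\<le>degree p. norm (coeff p i * x ^ i))"
    unfolding poly_altdef by (rule norm_sum)
  also have "\<dots> \<le> (\<Sum>i<Suc (degree p). h * r ^ i)"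
    unfolding lessThan_Suc_atMost
  proof (rule sum_mono)
    fix i
    have "norm (x ^ i) \<le> r ^ i"
      using assms(2) by (simp add: norm_power power_mono)
    then show "norm (coeff p i * x ^ i) \<le> h * r ^ i"
      unfolding norm_mult using coeff_bound \<open>h \<ge> 0\<close> by (intro mult_mono) auto
  qed
  also have "\<dots> = h * ((1 - r ^ Suc (degree p)) / (1 - r))"
    using \<open>r < 1\<close> by (simp only: sum_distrib_left[symmetric] sum_gp_strict) simp
  also have "\<dots> \<le> h / (1 - r)"
  proof -
    have "1 - r ^ Suc (degree p) \<le> 1"
      using \<open>r \<ge> 0\<close> by simp
    then show ?thesis
      using \<open>h \<ge> 0\<close> \<open>r < 1\<close> by (simp add: mult_left_le divide_right_mono)
  qed
  finally show ?thesis .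
qed

lemma eventually_uniformly_small_poly_times_power:
  fixes h r e :: real
  assumes "0 \<le> r" and "r < 1" and "e > 0"
  shows "\<exists>n0. \<forall>n\<ge>n0. \<forall>p :: 'a::real_normed_field poly. \<forall>x.
           (\<forall>i. norm (coeff p i) \<le> h) \<longrightarrow> norm x \<le> r \<longrightarrow> norm (poly p x * x ^ n) < e"
proof -
  have "(\<lambda>n. h / (1 - r) * r ^ n) \<longlonglongrightarrow> 0"
    using \<open>0 \<le> r\<close> \<open>r < 1\<close> by (intro tendsto_mult_right_zero LIMSEQ_power_zero) simp
  then have "eventually (\<lambda>n. h / (1 - r) * r ^ n < e) sequentially"
    using \<open>e > 0\<close> by (rule order_tendstoD)
  then obtain n0 where n0: "\<And>n. n \<ge> n0 \<Longrightarrow> h / (1 - r) * r ^ n < e"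
    unfolding eventually_sequentially by blast
  have "norm (poly p x * x ^ n) < e"
    if "n \<ge> n0" and "\<forall>i. norm (coeff p i) \<le> h" and "norm x \<le> r"
    for n and p :: "'a poly" and x
  proof -
    have "norm (poly p x) \<le> h / (1 - r)"
      using that(2,3) \<open>r < 1\<close> by (intro norm_poly_le_geometric) auto
    moreover have "norm (x ^ n) \<le> r ^ n"
      using that(3) by (simp add: norm_power power_mono)
    ultimately have "norm (poly p x * x ^ n) \<le> h / (1 - r) * r ^ n"
      unfolding norm_mult by (intro mult_mono) (auto intro: order_trans[OF norm_ge_zero])
    then show ?thesis
      using n0[OF that(1)] by linarith
  qed
  then show ?thesis
    by blast
qed

lemma sgn_add_eq_sgn_if_abs_less:
  fixes a b :: "'a::linordered_idom"
  assumes "\<bar>a\<bar> < \<bar>b\<bar>"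
  shows "sgn (a + b) = sgn b"
  using assms by (auto simp: sgn_if abs_if split: if_splits)

lemma mult_pos_if_abs_less:
  fixes a b c d :: "'a::linordered_idom"
  assumes "\<bar>a\<bar> < \<bar>b\<bar>" and "\<bar>c\<bar> < \<bar>d\<bar>" and "0 < b * d"
  shows "0 < (a + b) * (c + d)"
proof -
  have "sgn ((a + b) * (c + d)) = sgn (b * d)"
    using assms(1,2) by (simp add: sgn_mult sgn_add_eq_sgn_if_abs_less)
  with assms(3) show ?thesis
    by (simp add: sgn_1_pos)
qed

theorem lemma3p3:
  fixes g :: "real poly" and h :: real
  assumes "poly g c1 * poly g (- c1) > 0"
    and "h > 0"
  shows "\<exists>n0::nat. \<forall>f :: int poly. (\<forall>i. \<bar>real_of_int (coeff f i)\<bar> \<le> h) \<longrightarrow>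
           (\<forall>n\<ge>n0. let P = map_poly real_of_int f * monom 1 n + g
                     in poly P c1 * poly P (- c1) > 0)"
proof -
  define m where "m = min \<bar>poly g c1\<bar> \<bar>poly g (- c1)\<bar>"
  have "m > 0"
    using assms(1) unfolding m_def by (auto simp: zero_less_mult_iff)
  then obtain n0 where n0: "\<And>n p x. n \<ge> n0 \<Longrightarrow> \<forall>i. \<bar>coeff p i\<bar> \<le> h \<Longrightarrow> \<bar>x\<bar> \<le> c1 \<Longrightarrow>
      \<bar>poly p x * x ^ n\<bar> < m"
    using eventually_uniformly_small_poly_times_power[OF less_imp_le[OF c1_pos] c1_less_1, of m h,
        where 'a = real]
    unfolding real_norm_def by blast
  have "poly P c1 * poly P (- c1) > 0"
    if "\<forall>i. \<bar>real_of_int (coeff f i)\<bar> \<le> h" and "n \<ge> n0"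
      and "P = map_poly real_of_int f * monom 1 n + g" for f :: "int poly" and n P
  proof -
    let ?F = "map_poly real_of_int f"
    have small: "\<bar>poly ?F x * x ^ n\<bar> < m" if "\<bar>x\<bar> = c1" for x
      using n0 \<open>n \<ge> n0\<close> \<open>\<forall>i. \<bar>real_of_int (coeff f i)\<bar> \<le> h\<close> that by (simp add: coeff_map_poly)
    have "\<bar>poly ?F c1 * c1 ^ n\<bar> < \<bar>poly g c1\<bar>"
      and "\<bar>poly ?F (- c1) * (- c1) ^ n\<bar> < \<bar>poly g (- c1)\<bar>"
      using small[of c1] small[of "- c1"] c1_pos unfolding m_def by auto
    moreover have "poly P x = poly ?F x * x ^ n + poly g x" for x
      using \<open>P = _\<close> by (simp add: poly_monom)
    ultimately show ?thesis
      using mult_pos_if_abs_less[OF _ _ assms(1)] by simp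
  qed
  then show ?thesis
    unfolding Let_def by blast
qed

end
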